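(* Let $G$ be a group, $A$ a semilattice of groups, $\Theta=(\theta,w)$ a twisted partial action of $G$ on $A$, $\Lambda=\Lambda^\Theta=(\alpha,\lambda,f)$ the corresponding twisted $E(A)*_\theta G$-module structure on $A$, and $\Theta'=\Theta^\Lambda=(\theta',w')$ the twisted partial action of $\mathcal G(E(A)*_\theta G)$ on $A$ coming from $\Lambda$. Then there is an isomorphism $\nu:G\to\mathcal G(E(A)*_\theta G)$ such that $\Theta=\Theta'\circ\nu$, that is, $\theta_x=\theta'_{\nu(x)}$ and $w_{x,y}=w'_{\nu(x),\nu(y)}$ for all $x,y\in G$.
   Context: A semilattice of groups is an inverse semigroup $A$ with central idempotents; $A_e=\{a: aa^{-1}=a^{-1}a=e\}$. Multipliers of a semigroup $T$: pairs $(L,R)$ of maps with $L(st)=L(s)t$, $R(st)=sR(t)$, $sL(t)=R(s)t$, written $ws=L(s)$, $sw=R(s)$; monoid $\mathcal M(T)$, unit group $\mathcal U(\mathcal M(T))$. A twisted partial action of a group $H$ on $A$ is $(\theta,w)$ with isomorphisms $\theta_x:D_{x^{-1}}\to D_x$ of nonempty ideals and $w_{x,y}\in\mathcal U(\mathcal M(D_xD_{xy}))$ with (i) $D_x^2=D_x$, $D_xD_y=D_yD_x$; (ii) $D_1=A$, $\theta_1=\mathrm{id}$; (iii) $\theta_x(D_{x^{-1}}D_y)=D_xD_{xy}$; (iv) $\theta_x\theta_y(s)=w_{x,y}\theta_{xy}(s)w_{x,y}^{-1}$ on $D_{y^{-1}}D_{y^{-1}x^{-1}}$; (v) $w_{1,x}=w_{x,1}$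 = identity of $D_x$; (vi) $\theta_x(sw_{y,z})w_{x,yz}=\theta_x(s)w_{x,y}w_{xy,z}$ on $D_{x^{-1}}D_yD_{yz}$. The $\theta_x$ restrict to a partial action $\theta$ of $G$ on $E(A)$; $E(A)*_\theta G=\{e\delta_x: e\in E(D_x)\}$, $e\delta_x\cdot e'\delta_y=\theta_x(\theta_x^{-1}(e)e')\delta_{xy}$, is an $E$-unitary inverse semigroup; $\mathcal G(\cdot)$ denotes the maximum group image (quotient by the minimum group congruence $\sigma$). $\Lambda^\Theta=(\alpha,\lambda,f)$: $\alpha(e\delta_1)=e$, $\lambda_{e\delta_x}(a)=\theta_x(\theta_x^{-1}(e)a)$, $f(e\delta_x,e'\delta_y)=\theta_x(\theta_x^{-1}(e)e')w_{x,y}$; it is a Sieben twisted module structure (i.e. $\alpha:E(S)\to E(A)$ an isomorphism, $\lambda_s$ endomorphisms, $f(s,t)\in A_{\alpha(stt^{-1}s^{-1})}$, and $f(s,e)=\alpha(ses^{-1})$, $f(e,s)=\alpha(ess^{-1})$ for idempotents $e$, among the twisted-module axioms). For a Sieben structure $(\alpha,\lambda,f)$ over an $E$-unitary $S$, $\Theta^\Lambda=(\theta',w')$ is: $D'_X=\bigsqcup_{s\in X}A_{\alpha(ss^{-1})}$ for $X\in\mathcal G(S)$; $\theta'_X(a)=\lambda_s(a)$ for $a\in D'_{X^{-1}}$, $s\in X$ unique with $\alpha(s^{-1}s)=aa^{-1}$; $w'_{X,Y}a=f(s,s^{-1}t)a$, $aw'_{X,Y}=af(s,s^{-1}t)$ for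 $a\in D'_XD'_{XY}$, $s\in X$, $t\in XY$ unique with $\alpha(ss^{-1})=\alpha(tt^{-1})=aa^{-1}$. *)

theory Defs
  imports "HOL-Algebra.Group"
begin

definition setmul :: "('a \<Rightarrow> 'a \<Rightarrow> 'a) \<Rightarrow> 'a set \<Rightarrow> 'a set \<Rightarrow> 'a set" where
  "setmul m X Y = {m a b | a b. a \<in> X \<and> b \<in> Y}"

definition inverse_semigroup :: "'a set \<Rightarrow> ('a \<Rightarrow> 'a \<Rightarrow> 'a) \<Rightarrow> bool" where
  "inverse_semigroup A m \<longleftrightarrow>
     (\<forall>a\<in>A. \<forall>b\<in>A. m a b \<in> A) \<and>
     (\<forall>a\<in>A. \<forall>b\<in>A. \<forall>c\<in>A. m (m a b) c = m a (m b c)) \<and>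
     (\<forall>a\<in>A. \<exists>!b. b \<in> A \<and> m (m a b) a = a \<and> m (m b a) b = b)"

definition sinv :: "'a set \<Rightarrow> ('a \<Rightarrow> 'a \<Rightarrow> 'a) \<Rightarrow> 'a \<Rightarrow> 'a" where
  "sinv A m a = (THE b. b \<in> A \<and> m (m a b) a = a \<and> m (m b a) b = b)"

definition idems :: "'a set \<Rightarrow> ('a \<Rightarrow> 'a \<Rightarrow> 'a) \<Rightarrow> 'a set" where
  "idems A m = {e \<in> A. m e e = e}"

definition semilattice_of_groups :: "'a set \<Rightarrow> ('a \<Rightarrow> 'a \<Rightarrow> 'a) \<Rightarrow> bool" where
  "semilattice_of_groups A m \<longleftrightarrow> inverse_semigroup A m \<and>
     (\<forall>e\<in>idems A m. \<forall>a\<in>A. m e a = m a e)"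

definition comp_grp :: "'a set \<Rightarrow> ('a \<Rightarrow> 'a \<Rightarrow> 'a) \<Rightarrow> 'a \<Rightarrow> 'a set" where
  "comp_grp A m e = {a \<in> A. m a (sinv A m a) = e \<and> m (sinv A m a) a = e}"

definition is_ideal :: "'a set \<Rightarrow> ('a \<Rightarrow> 'a \<Rightarrow> 'a) \<Rightarrow> 'a set \<Rightarrow> bool" where
  "is_ideal A m I \<longleftrightarrow> I \<noteq> {} \<and> I \<subseteq> A \<and> (\<forall>a\<in>A. \<forall>b\<in>I. m a b \<in> I \<and> m b a \<in> I)"

definition semigroup_iso :: "('a \<Rightarrow> 'a \<Rightarrow> 'a) \<Rightarrow> ('a \<Rightarrow> 'a) \<Rightarrow> 'a set \<Rightarrow> 'a set \<Rightarrow> bool" where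
  "semigroup_iso m h I J \<longleftrightarrow> bij_betw h I J \<and> (\<forall>a\<in>I. \<forall>b\<in>I. h (m a b) = m (h a) (h b))"

text \<open>A multiplier $w$ of $T$ is a pair $(L,R)$; $w s = L s$, $s w = R s$.\<close>
type_synonym 'a multiplier = "('a \<Rightarrow> 'a) \<times> ('a \<Rightarrow> 'a)"

definition is_multiplier :: "'a set \<Rightarrow> ('a \<Rightarrow> 'a \<Rightarrow> 'a) \<Rightarrow> 'a multiplier \<Rightarrow> bool" where
  "is_multiplier T m w \<longleftrightarrow>
     (\<forall>s\<in>T. fst w s \<in> T \<and> snd w s \<in> T) \<and>
     (\<forall>s\<in>T. \<forall>t\<in>T. fst w (m s t) = m (fst w s) t \<and> snd w (m s t) = m s (snd w t)
                    \<and> m s (fst w t) = m (snd w s) t)"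

text \<open>Product in $\mathcal M(T)$: $(w w') s = w (w' s)$, $s (w w') = (s w) w'$.\<close>
definition mult_comp :: "'a multiplier \<Rightarrow> 'a multiplier \<Rightarrow> 'a multiplier" where
  "mult_comp w v = (fst w \<circ> fst v, snd v \<circ> snd w)"

definition mult_eq_on :: "'a set \<Rightarrow> 'a multiplier \<Rightarrow> 'a multiplier \<Rightarrow> bool" where
  "mult_eq_on T w v \<longleftrightarrow> (\<forall>s\<in>T. fst w s = fst v s \<and> snd w s = snd v s)"

definition mult_is_inverse :: "'a set \<Rightarrow> ('a \<Rightarrow> 'a \<Rightarrow> 'a) \<Rightarrow> 'a multiplier \<Rightarrow> 'a multiplier \<Rightarrow> bool" where
  "mult_is_inverse T m w v \<longleftrightarrow> is_multiplier T m v \<and>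
     mult_eq_on T (mult_comp w v) (id, id) \<and> mult_eq_on T (mult_comp v w) (id, id)"

definition is_unit_multiplier :: "'a set \<Rightarrow> ('a \<Rightarrow> 'a \<Rightarrow> 'a) \<Rightarrow> 'a multiplier \<Rightarrow> bool" where
  "is_unit_multiplier T m w \<longleftrightarrow> is_multiplier T m w \<and> (\<exists>v. mult_is_inverse T m w v)"

definition mult_inv :: "'a set \<Rightarrow> ('a \<Rightarrow> 'a \<Rightarrow> 'a) \<Rightarrow> 'a multiplier \<Rightarrow> 'a multiplier" where
  "mult_inv T m w = (SOME v. mult_is_inverse T m w v)"

definition twisted_partial_action ::
  "('g, 'b) monoid_scheme \<Rightarrow> 'a set \<Rightarrow> ('a \<Rightarrow> 'a \<Rightarrow> 'a) \<Rightarrow>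
   ('g \<Rightarrow> 'a set) \<Rightarrow> ('g \<Rightarrow> 'a \<Rightarrow> 'a) \<Rightarrow> ('g \<Rightarrow> 'g \<Rightarrow> 'a multiplier) \<Rightarrow> bool" where
  "twisted_partial_action H A m D \<theta> w \<longleftrightarrow>
     (\<forall>x\<in>carrier H. is_ideal A m (D x)) \<and>
     (\<forall>x\<in>carrier H. semigroup_iso m (\<theta> x) (D (inv\<^bsub>H\<^esub> x)) (D x)) \<and>
     (\<forall>x\<in>carrier H. \<forall>y\<in>carrier H.
        is_unit_multiplier (setmul m (D x) (D (x \<otimes>\<^bsub>H\<^esub> y))) m (w x y)) \<and>
     \<comment> \<open>(i)\<close>
     (\<forall>x\<in>carrier H. setmul m (D x) (D x) = D x) \<and>
     (\<forall>x\<in>carrier H. \<forall>y\<in>carrier H. setmul m (D x) (D y) = setmul m (D y) (D x)) \<and>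
     \<comment> \<open>(ii)\<close>
     D \<one>\<^bsub>H\<^esub> = A \<and> (\<forall>a\<in>A. \<theta> \<one>\<^bsub>H\<^esub> a = a) \<and>
     \<comment> \<open>(iii)\<close>
     (\<forall>x\<in>carrier H. \<forall>y\<in>carrier H.
        \<theta> x ` setmul m (D (inv\<^bsub>H\<^esub> x)) (D y) = setmul m (D x) (D (x \<otimes>\<^bsub>H\<^esub> y))) \<and>
     \<comment> \<open>(iv)\<close>
     (\<forall>x\<in>carrier H. \<forall>y\<in>carrier H.
        \<forall>s\<in>setmul m (D (inv\<^bsub>H\<^esub> y)) (D (inv\<^bsub>H\<^esub> y \<otimes>\<^bsub>H\<^esub> inv\<^bsub>H\<^esub> x)).
          \<theta> x (\<theta> y s) =
            fst (w x y) (snd (mult_inv (setmul m (D x) (D (x \<otimes>\<^bsub>H\<^esub> y))) m (w x y))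
                          (\<theta> (x \<otimes>\<^bsub>H\<^esub> y) s))) \<and>
     \<comment> \<open>(v)\<close>
     (\<forall>x\<in>carrier H. mult_eq_on (D x) (w \<one>\<^bsub>H\<^esub> x) (id, id) \<and>
                    mult_eq_on (D x) (w x \<one>\<^bsub>H\<^esub>) (id, id)) \<and>
     \<comment> \<open>(vi)\<close>
     (\<forall>x\<in>carrier H. \<forall>y\<in>carrier H. \<forall>z\<in>carrier H.
        \<forall>s\<in>setmul m (setmul m (D (inv\<^bsub>H\<^esub> x)) (D y)) (D (y \<otimes>\<^bsub>H\<^esub> z)).
          snd (w x (y \<otimes>\<^bsub>H\<^esub> z)) (\<theta> x (snd (w y z) s)) =
          snd (w (x \<otimes>\<^bsub>H\<^esub> y) z) (snd (w x y) (\<theta> x s)))"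

definition theta_inv :: "('g, 'b) monoid_scheme \<Rightarrow> ('g \<Rightarrow> 'a set) \<Rightarrow> ('g \<Rightarrow> 'a \<Rightarrow> 'a) \<Rightarrow> 'g \<Rightarrow> 'a \<Rightarrow> 'a" where
  "theta_inv H D \<theta> x = inv_into (D (inv\<^bsub>H\<^esub> x)) (\<theta> x)"

text \<open>Elements $e\delta_x$ are represented as pairs $(e,x)$.\<close>
definition crossed_carrier :: "('g, 'b) monoid_scheme \<Rightarrow> 'a set \<Rightarrow> ('a \<Rightarrow> 'a \<Rightarrow> 'a) \<Rightarrow> ('g \<Rightarrow> 'a set) \<Rightarrow> ('a \<times> 'g) set" where
  "crossed_carrier H A m D = {(e, x). x \<in> carrier H \<and> e \<in> idems (D x) m}"

definition crossed_mult :: "('g, 'b) monoid_scheme \<Rightarrow> ('a \<Rightarrow> 'a \<Rightarrow> 'a) \<Rightarrow> ('g \<Rightarrow> 'a set) \<Rightarrow> ('g \<Rightarrow> 'a \<Rightarrow> 'a)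
    \<Rightarrow> 'a \<times> 'g \<Rightarrow> 'a \<times> 'g \<Rightarrow> 'a \<times> 'g" where
  "crossed_mult H m D \<theta> s t =
     (\<theta> (snd s) (m (theta_inv H D \<theta> (snd s) (fst s)) (fst t)), snd s \<otimes>\<^bsub>H\<^esub> snd t)"

definition sg_congruence :: "'s set \<Rightarrow> ('s \<Rightarrow> 's \<Rightarrow> 's) \<Rightarrow> ('s \<times> 's) set \<Rightarrow> bool" where
  "sg_congruence S m \<rho> \<longleftrightarrow> equiv S \<rho> \<and>
     (\<forall>(s, t)\<in>\<rho>. \<forall>u\<in>S. (m s u, m t u) \<in> \<rho> \<and> (m u s, m u t) \<in> \<rho>)"

definition quot_monoid :: "'s set \<Rightarrow> ('s \<Rightarrow> 's \<Rightarrow> 's) \<Rightarrow> ('s \<times> 's) set \<Rightarrow> 's set monoid" where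
  "quot_monoid S m \<rho> =
     \<lparr> carrier = S // \<rho>,
       mult = (\<lambda>X Y. \<rho> `` {m (SOME s. s \<in> X) (SOME t. t \<in> Y)}),
       one = \<rho> `` {SOME e. e \<in> idems S m} \<rparr>"

definition group_congruence :: "'s set \<Rightarrow> ('s \<Rightarrow> 's \<Rightarrow> 's) \<Rightarrow> ('s \<times> 's) set \<Rightarrow> bool" where
  "group_congruence S m \<rho> \<longleftrightarrow> sg_congruence S m \<rho> \<and> group (quot_monoid S m \<rho>)"

definition min_group_congruence :: "'s set \<Rightarrow> ('s \<Rightarrow> 's \<Rightarrow> 's) \<Rightarrow> ('s \<times> 's) set" where
  "min_group_congruence S m = \<Inter> {\<rho>. group_congruence S m \<rho>}"

definition max_group_image :: "'s set \<Rightarrow> ('s \<Rightarrow> 's \<Rightarrow> 's) \<Rightarrow> 's set monoid" where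
  "max_group_image S m = quot_monoid S m (min_group_congruence S m)"

section \<open>From a twisted module structure to a twisted partial action: $\Theta^\Lambda$\<close>

definition TL_dom :: "'s set \<Rightarrow> ('s \<Rightarrow> 's \<Rightarrow> 's) \<Rightarrow> 'a set \<Rightarrow> ('a \<Rightarrow> 'a \<Rightarrow> 'a) \<Rightarrow> ('s \<Rightarrow> 'a)
    \<Rightarrow> 's set \<Rightarrow> 'a set" where
  "TL_dom S Sm A m \<alpha> X = (\<Union>s\<in>X. comp_grp A m (\<alpha> (Sm s (sinv S Sm s))))"

definition TL_theta :: "'s set \<Rightarrow> ('s \<Rightarrow> 's \<Rightarrow> 's) \<Rightarrow> 'a set \<Rightarrow> ('a \<Rightarrow> 'a \<Rightarrow> 'a) \<Rightarrow> ('s \<Rightarrow> 'a)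
    \<Rightarrow> ('s \<Rightarrow> 'a \<Rightarrow> 'a) \<Rightarrow> 's set \<Rightarrow> 'a \<Rightarrow> 'a" where
  "TL_theta S Sm A m \<alpha> lam X a =
     lam (THE s. s \<in> X \<and> \<alpha> (Sm (sinv S Sm s) s) = m a (sinv A m a)) a"

definition TL_w :: "'s set \<Rightarrow> ('s \<Rightarrow> 's \<Rightarrow> 's) \<Rightarrow> 'a set \<Rightarrow> ('a \<Rightarrow> 'a \<Rightarrow> 'a) \<Rightarrow> ('s \<Rightarrow> 'a)
    \<Rightarrow> ('s \<Rightarrow> 's \<Rightarrow> 'a) \<Rightarrow> 's set \<Rightarrow> 's set \<Rightarrow> 'a multiplier" where
  "TL_w S Sm A m \<alpha> f X Y =
     (let GS = max_group_image S Sm;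
          sel = (\<lambda>Z a. THE s. s \<in> Z \<and> \<alpha> (Sm s (sinv S Sm s)) = m a (sinv A m a));
          coef = (\<lambda>a. f (sel X a) (Sm (sinv S Sm (sel X a)) (sel (X \<otimes>\<^bsub>GS\<^esub> Y) a)))
      in (\<lambda>a. m (coef a) a, \<lambda>a. m a (coef a)))"

section \<open>From a twisted partial action to a twisted module structure: $\Lambda^\Theta$\<close>

definition LT_alpha :: "'a \<times> 'g \<Rightarrow> 'a" where
  "LT_alpha s = fst s"

definition LT_lambda :: "('g, 'b) monoid_scheme \<Rightarrow> ('a \<Rightarrow> 'a \<Rightarrow> 'a) \<Rightarrow> ('g \<Rightarrow> 'a set) \<Rightarrow> ('g \<Rightarrow> 'a \<Rightarrow> 'a)
    \<Rightarrow> 'a \<times> 'g \<Rightarrow> 'a \<Rightarrow> 'a" where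
  "LT_lambda H m D \<theta> s a = \<theta> (snd s) (m (theta_inv H D \<theta> (snd s) (fst s)) a)"

definition LT_f :: "('g, 'b) monoid_scheme \<Rightarrow> ('a \<Rightarrow> 'a \<Rightarrow> 'a) \<Rightarrow> ('g \<Rightarrow> 'a set) \<Rightarrow> ('g \<Rightarrow> 'a \<Rightarrow> 'a)
    \<Rightarrow> ('g \<Rightarrow> 'g \<Rightarrow> 'a multiplier) \<Rightarrow> 'a \<times> 'g \<Rightarrow> 'a \<times> 'g \<Rightarrow> 'a" where
  "LT_f H m D \<theta> w s t =
     snd (w (snd s) (snd t)) (\<theta> (snd s) (m (theta_inv H D \<theta> (snd s) (fst s)) (fst t)))"

end

theory Submission
  imports Defs
begin

text \<open>
  The semigroup \<open>E(A) *\<^sub>\<theta> G\<close> is graded by \<open>G\<close>, and the minimum group congruence \<open>\<sigma>\<close> is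
  exactly "same degree": the degree relation is a group congruence, and any group congruence
  identifies all idempotents with the unit, so that \<open>e\<delta>\<^sub>x\<close> and \<open>f\<delta>\<^sub>x\<close> are both related to
  \<open>ef\<delta>\<^sub>x\<close>. Hence \<open>\<nu> x = {e\<delta>\<^sub>x}\<close> is an isomorphism onto \<open>\<G>(E(A) *\<^sub>\<theta> G)\<close>.
  The elements of \<open>\<nu> x\<close> picked out by \<open>a\<close> in the construction of \<open>\<Theta>\<^sup>\<Lambda>\<close> are of the form
  \<open>aa\<^sup>-\<^sup>1\<delta>\<^sub>x\<close>, and the inverse of \<open>e\<delta>\<^sub>x\<close> is \<open>\<theta>\<^sub>x\<^sup>-\<^sup>1(e)\<delta>\<^sub>x\<^sub>\<^sup>-\<^sup>1\<close>; unwinding \<open>\<Lambda>\<^sup>\<Theta>\<close> at these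
  elements returns \<open>\<theta>\<^sub>x\<close> and \<open>w\<^sub>x\<^sub>,\<^sub>y\<close>.
\<close>

lemma setmulI: "a \<in> X \<Longrightarrow> b \<in> Y \<Longrightarrow> m a b \<in> setmul m X Y"
  unfolding setmul_def by blast

lemma unit_multiplier_mult_inv:
  "is_unit_multiplier T m w \<Longrightarrow> mult_is_inverse T m w (mult_inv T m w)"
  unfolding is_unit_multiplier_def mult_inv_def by (blast intro: someI_ex)

locale semilattice_grp =
  fixes A :: "'a set" and m :: "'a \<Rightarrow> 'a \<Rightarrow> 'a"
  assumes semilattice_of_groups: "semilattice_of_groups A m"
begin

lemma mult_closed: "a \<in> A \<Longrightarrow> b \<in> A \<Longrightarrow> m a b \<in> A"
  using semilattice_of_groups unfolding semilattice_of_groups_def inverse_semigroup_def by blast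

lemma mult_assoc: "a \<in> A \<Longrightarrow> b \<in> A \<Longrightarrow> c \<in> A \<Longrightarrow> m (m a b) c = m a (m b c)"
  using semilattice_of_groups unfolding semilattice_of_groups_def inverse_semigroup_def by blast

lemma idem_commute: "e \<in> A \<Longrightarrow> m e e = e \<Longrightarrow> a \<in> A \<Longrightarrow> m e a = m a e"
  using semilattice_of_groups unfolding semilattice_of_groups_def idems_def by blast

lemma sinv_closed: "a \<in> A \<Longrightarrow> sinv A m a \<in> A"
  and mult_sinv_mult: "a \<in> A \<Longrightarrow> m (m a (sinv A m a)) a = a"
  and sinv_mult_sinv: "a \<in> A \<Longrightarrow> m (m (sinv A m a) a) (sinv A m a) = sinv A m a"
proof -
  assume a: "a \<in> A"
  have "\<exists>!b. b \<in> A \<and> m (m a b) a = a \<and> m (m b a) b = b"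
    using semilattice_of_groups a unfolding semilattice_of_groups_def inverse_semigroup_def by blast
  from theI'[OF this]
  show "sinv A m a \<in> A" "m (m a (sinv A m a)) a = a"
    "m (m (sinv A m a) a) (sinv A m a) = sinv A m a"
    unfolding sinv_def by auto
qed

lemma mult_sinv_idem: "a \<in> A \<Longrightarrow> m (m a (sinv A m a)) (m a (sinv A m a)) = m a (sinv A m a)"
  by (metis mult_assoc mult_closed sinv_closed mult_sinv_mult)

lemma sinv_mult_eq_mult_sinv: "a \<in> A \<Longrightarrow> m (sinv A m a) a = m a (sinv A m a)"
proof -
  assume a: "a \<in> A"
  let ?b = "sinv A m a"
  let ?e = "m a ?b" and ?f = "m ?b a"
  have b: "?b \<in> A" using sinv_closed a .
  have eA: "?e \<in> A" and fA: "?f \<in> A" using a b mult_closed by auto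
  have ea: "m ?e a = a" using mult_sinv_mult[OF a] .
  have e_idem: "m ?e ?e = ?e" using mult_sinv_idem[OF a] .
  have f_idem: "m ?f ?f = ?f"
    using mult_assoc[OF fA b a] sinv_mult_sinv[OF a] by simp
  have af: "m a ?f = a" using ea mult_assoc[OF a b a] by simp
  have "m ?f ?e = m (m ?f a) ?b" using mult_assoc[OF fA a b] by simp
  also have "m ?f a = m a ?f" using idem_commute[OF fA f_idem a] .
  finally have "m ?f ?e = ?e" using af by simp
  moreover have "m ?f ?e = m ?b (m a ?e)" using mult_assoc[OF b a eA] by simp
  moreover have "m a ?e = m ?e a" using idem_commute[OF eA e_idem a] by simp
  ultimately show ?thesis using ea by simp
qed

lemma mult_mult_sinv: "a \<in> A \<Longrightarrow> m a (m a (sinv A m a)) = a"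
  by (metis mult_assoc sinv_closed mult_sinv_mult sinv_mult_eq_mult_sinv)

lemma idem_mult_idem:
  "e \<in> A \<Longrightarrow> m e e = e \<Longrightarrow> f \<in> A \<Longrightarrow> m f f = f \<Longrightarrow> m (m e f) (m e f) = m e f"
  by (metis mult_assoc idem_commute mult_closed)

lemma idem_mult_absorb:
  assumes e: "e \<in> A" "m e e = e" and f: "f \<in> A"
  shows "m (m e f) e = m e f"
proof -
  have "m (m e f) e = m e (m f e)" using mult_assoc e f by simp
  also have "\<dots> = m e (m e f)" using idem_commute[OF e f] by simp
  also have "\<dots> = m e f" using mult_assoc[OF e(1) e(1) f] e(2) by simp
  finally show ?thesis .
qed

lemma setmul_subset: "X \<subseteq> A \<Longrightarrow> Y \<subseteq> A \<Longrightarrow> setmul m X Y \<subseteq> A"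
  unfolding setmul_def using mult_closed by blast

lemma multiplier_fst_eq_snd_idem:
  assumes "is_multiplier T m v" "T \<subseteq> A" "e \<in> T" "m e e = e"
  shows "fst v e = snd v e"
proof -
  have inT: "fst v e \<in> T" "snd v e \<in> T" using assms unfolding is_multiplier_def by auto
  have eA: "e \<in> A" using assms by auto
  have "fst v e = m (fst v e) e" using assms unfolding is_multiplier_def by metis
  also have "\<dots> = m e (fst v e)" using idem_commute[OF eA assms(4)] inT assms(2) by auto
  also have "\<dots> = m (snd v e) e" using assms unfolding is_multiplier_def by metis
  also have "\<dots> = m e (snd v e)" using idem_commute[OF eA assms(4)] inT assms(2) by auto
  also have "\<dots> = snd v e" using assms unfolding is_multiplier_def by metis
  finally show ?thesis .
qed

lemma multiplier_apply_mult_sinv: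
  assumes v: "is_multiplier T m v" and a: "a \<in> T" "a \<in> A" and e: "m a (sinv A m a) \<in> T"
  shows "fst v a = m (fst v (m a (sinv A m a))) a" "snd v a = m a (snd v (m a (sinv A m a)))"
  using v a e mult_sinv_mult[OF a(2)] mult_mult_sinv[OF a(2)]
  unfolding is_multiplier_def by metis+

end

lemma quot_monoid_mult_class:
  assumes cong: "sg_congruence S m r" and s: "s \<in> S" and t: "t \<in> S"
  shows "r `` {s} \<otimes>\<^bsub>quot_monoid S m r\<^esub> r `` {t} = r `` {m s t}"
proof -
  have eq: "equiv S r"
    and compat: "\<And>s t u. (s, t) \<in> r \<Longrightarrow> u \<in> S \<Longrightarrow> (m s u, m t u) \<in> r \<and> (m u s, m u t) \<in> r"
    using cong unfolding sg_congruence_def by auto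
  let ?s = "SOME s'. s' \<in> r `` {s}" and ?t = "SOME t'. t' \<in> r `` {t}"
  have "?s \<in> r `` {s}" using equiv_class_self[OF eq s] by (rule someI)
  moreover have "?t \<in> r `` {t}" using equiv_class_self[OF eq t] by (rule someI)
  ultimately have ss: "(s, ?s) \<in> r" and tt: "(t, ?t) \<in> r" by auto
  then have "?s \<in> S" using eq unfolding equiv_def refl_on_def by auto
  have "(m s t, m ?s t) \<in> r" using compat[OF ss t] by blast
  moreover have "(m ?s t, m ?s ?t) \<in> r" using compat[OF tt \<open>?s \<in> S\<close>] by blast
  ultimately have "(m s t, m ?s ?t) \<in> r" using eq unfolding equiv_def trans_def by blast
  then have "r `` {m s t} = r `` {m ?s ?t}" by (rule equiv_class_eq[OF eq])
  then show ?thesis unfolding quot_monoid_def by simp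
qed

lemma group_congruence_idem_class:
  assumes gc: "group_congruence S m r" and i: "i \<in> S" "m i i = i"
  shows "r `` {i} = \<one>\<^bsub>quot_monoid S m r\<^esub>"
proof -
  interpret Q: group "quot_monoid S m r" using gc unfolding group_congruence_def by simp
  have "r `` {i} \<in> carrier (quot_monoid S m r)"
    unfolding quot_monoid_def using i by (simp add: quotientI)
  moreover have "r `` {i} \<otimes>\<^bsub>quot_monoid S m r\<^esub> r `` {i} = r `` {i}"
    using gc quot_monoid_mult_class[of S m r i i] i unfolding group_congruence_def by simp
  ultimately show ?thesis using Q.l_cancel_one by blast
qed

locale twisted_pa = G: group G + semilattice_grp A m
  for G :: "('g, 'b) monoid_scheme" and A :: "'a set" and m :: "'a \<Rightarrow> 'a \<Rightarrow> 'a" +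
  fixes D :: "'g \<Rightarrow> 'a set" and \<theta> :: "'g \<Rightarrow> 'a \<Rightarrow> 'a" and w :: "'g \<Rightarrow> 'g \<Rightarrow> 'a multiplier"
  assumes tpa: "twisted_partial_action G A m D \<theta> w"
begin

lemma D_ideal: "x \<in> carrier G \<Longrightarrow> is_ideal A m (D x)"
  using tpa unfolding twisted_partial_action_def by auto

lemma D_subset: "x \<in> carrier G \<Longrightarrow> D x \<subseteq> A"
  and D_nonempty: "x \<in> carrier G \<Longrightarrow> D x \<noteq> {}"
  and D_mult_left: "x \<in> carrier G \<Longrightarrow> a \<in> A \<Longrightarrow> b \<in> D x \<Longrightarrow> m a b \<in> D x"
  and D_mult_right: "x \<in> carrier G \<Longrightarrow> a \<in> A \<Longrightarrow> b \<in> D x \<Longrightarrow> m b a \<in> D x"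
  using D_ideal unfolding is_ideal_def by blast+

lemma D_elem: "x \<in> carrier G \<Longrightarrow> a \<in> D x \<Longrightarrow> a \<in> A"
  using D_subset by blast

lemma D_one: "D \<one>\<^bsub>G\<^esub> = A"
  and theta_one: "a \<in> A \<Longrightarrow> \<theta> \<one>\<^bsub>G\<^esub> a = a"
  using tpa unfolding twisted_partial_action_def by auto

lemma theta_iso: "x \<in> carrier G \<Longrightarrow> semigroup_iso m (\<theta> x) (D (inv\<^bsub>G\<^esub> x)) (D x)"
  using tpa unfolding twisted_partial_action_def by auto

lemma theta_bij: "x \<in> carrier G \<Longrightarrow> bij_betw (\<theta> x) (D (inv\<^bsub>G\<^esub> x)) (D x)"
  and theta_hom: "x \<in> carrier G \<Longrightarrow> a \<in> D (inv\<^bsub>G\<^esub> x) \<Longrightarrow> b \<in> D (inv\<^bsub>G\<^esub> x) \<Longrightarrow>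
    \<theta> x (m a b) = m (\<theta> x a) (\<theta> x b)"
  using theta_iso unfolding semigroup_iso_def by blast+

lemma theta_in: "x \<in> carrier G \<Longrightarrow> a \<in> D (inv\<^bsub>G\<^esub> x) \<Longrightarrow> \<theta> x a \<in> D x"
  using theta_bij bij_betwE by blast

lemma theta_inj: "x \<in> carrier G \<Longrightarrow> inj_on (\<theta> x) (D (inv\<^bsub>G\<^esub> x))"
  using theta_bij bij_betw_def by blast

lemma w_unit: "x \<in> carrier G \<Longrightarrow> y \<in> carrier G \<Longrightarrow>
    is_unit_multiplier (setmul m (D x) (D (x \<otimes>\<^bsub>G\<^esub> y))) m (w x y)"
  using tpa unfolding twisted_partial_action_def by auto

lemma theta_image_setmul: "x \<in> carrier G \<Longrightarrow> y \<in> carrier G \<Longrightarrow>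
    \<theta> x ` setmul m (D (inv\<^bsub>G\<^esub> x)) (D y) = setmul m (D x) (D (x \<otimes>\<^bsub>G\<^esub> y))"
  using tpa unfolding twisted_partial_action_def by (elim conjE) blast

lemma theta_theta: "x \<in> carrier G \<Longrightarrow> y \<in> carrier G \<Longrightarrow>
    s \<in> setmul m (D (inv\<^bsub>G\<^esub> y)) (D (inv\<^bsub>G\<^esub> y \<otimes>\<^bsub>G\<^esub> inv\<^bsub>G\<^esub> x)) \<Longrightarrow>
    \<theta> x (\<theta> y s) = fst (w x y) (snd (mult_inv (setmul m (D x) (D (x \<otimes>\<^bsub>G\<^esub> y))) m (w x y))
                                (\<theta> (x \<otimes>\<^bsub>G\<^esub> y) s))"
  using tpa unfolding twisted_partial_action_def by auto

abbreviation "ti \<equiv> theta_inv G D \<theta>"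

lemma theta_inv_in: "x \<in> carrier G \<Longrightarrow> b \<in> D x \<Longrightarrow> ti x b \<in> D (inv\<^bsub>G\<^esub> x)"
  and theta_theta_inv: "x \<in> carrier G \<Longrightarrow> b \<in> D x \<Longrightarrow> \<theta> x (ti x b) = b"
  unfolding theta_inv_def using theta_bij
  by (metis bij_betw_imp_surj_on inv_into_into, metis bij_betw_imp_surj_on f_inv_into_f)

lemma theta_inv_theta: "x \<in> carrier G \<Longrightarrow> a \<in> D (inv\<^bsub>G\<^esub> x) \<Longrightarrow> ti x (\<theta> x a) = a"
  unfolding theta_inv_def using theta_inj by (metis inv_into_f_f)

lemma theta_inv_one: "a \<in> A \<Longrightarrow> ti \<one>\<^bsub>G\<^esub> a = a"
  using theta_inv_theta[of "\<one>\<^bsub>G\<^esub>" a] theta_one D_one by simp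

text \<open>
  Axiom (iv) for \<open>y = x\<^sup>-\<^sup>1\<close> gives \<open>\<theta>\<^sub>x\<theta>\<^sub>x\<^sub>\<^sup>-\<^sup>1 = w \<theta>\<^sub>1 w\<^sup>-\<^sup>1\<close>, and on an idempotent the
  multiplier \<open>w\<close> and its inverse cancel because they act on it from both sides alike.
\<close>

lemma theta_theta_inv_idem:
  assumes x: "x \<in> carrier G" and e: "e \<in> D x" "m e e = e"
  shows "\<theta> x (\<theta> (inv\<^bsub>G\<^esub> x) e) = e"
proof -
  let ?T = "setmul m (D x) (D (x \<otimes>\<^bsub>G\<^esub> inv\<^bsub>G\<^esub> x))"
  let ?w = "w x (inv\<^bsub>G\<^esub> x)"
  let ?v = "mult_inv ?T m ?w"
  have T: "?T = setmul m (D x) A" using x D_one by simp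
  have eA: "e \<in> A" using D_elem x e by blast
  have eT: "e \<in> ?T" by (metis T e(2) setmulI[OF e(1) eA])
  have TA: "?T \<subseteq> A" using T setmul_subset D_subset x by auto
  have inverse: "mult_is_inverse ?T m ?w ?v"
    using unit_multiplier_mult_inv w_unit x by blast
  have "e \<in> setmul m (D (inv\<^bsub>G\<^esub> (inv\<^bsub>G\<^esub> x))) (D (inv\<^bsub>G\<^esub> (inv\<^bsub>G\<^esub> x) \<otimes>\<^bsub>G\<^esub> inv\<^bsub>G\<^esub> x))"
    using eT x by simp
  from theta_theta[OF x _ this]
  have "\<theta> x (\<theta> (inv\<^bsub>G\<^esub> x) e) = fst ?w (snd ?v e)" using x theta_one eA by simp
  also have "snd ?v e = fst ?v e"
    using inverse multiplier_fst_eq_snd_idem TA eT e(2) unfolding mult_is_inverse_def by metis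
  also have "fst ?w (fst ?v e) = e"
    using inverse eT unfolding mult_is_inverse_def mult_eq_on_def mult_comp_def by auto
  finally show ?thesis .
qed

lemma theta_inv_idem:
  assumes x: "x \<in> carrier G" and e: "e \<in> D x" "m e e = e"
  shows "ti x e = \<theta> (inv\<^bsub>G\<^esub> x) e"
  using theta_inv_theta[OF x] theta_in[of "inv\<^bsub>G\<^esub> x"] theta_theta_inv_idem[OF x e] e x by force

lemma theta_inv_idem_idem:
  assumes x: "x \<in> carrier G" and e: "e \<in> D x" "m e e = e"
  shows "m (ti x e) (ti x e) = ti x e"
proof -
  have ix: "inv\<^bsub>G\<^esub> x \<in> carrier G" using x by simp
  have u: "ti x e \<in> D (inv\<^bsub>G\<^esub> x)" using theta_inv_in[OF x e(1)] .
  have "m (ti x e) (ti x e) \<in> D (inv\<^bsub>G\<^esub> x)" using D_mult_left[OF ix D_elem[OF ix u] u] .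
  moreover have "\<theta> x (m (ti x e) (ti x e)) = \<theta> x (ti x e)"
    using theta_hom[OF x u u] theta_theta_inv[OF x e(1)] e(2) by simp
  ultimately show ?thesis using theta_inj[OF x] u by (meson inj_onD)
qed

lemma theta_inv_inv_theta_inv_idem:
  assumes x: "x \<in> carrier G" and e: "e \<in> D x" "m e e = e"
  shows "ti (inv\<^bsub>G\<^esub> x) (ti x e) = e"
  using theta_inv_idem[OF x e] theta_inv_theta[of "inv\<^bsub>G\<^esub> x" e] x e by simp

abbreviation "S \<equiv> crossed_carrier G A m D"
abbreviation "Sm \<equiv> crossed_mult G m D \<theta>"

lemma crossed_mem: "(e, x) \<in> S \<longleftrightarrow> x \<in> carrier G \<and> e \<in> D x \<and> m e e = e"
  unfolding crossed_carrier_def idems_def by auto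

lemma crossed_mult_simp: "Sm (e, x) (f, y) = (\<theta> x (m (ti x e) f), x \<otimes>\<^bsub>G\<^esub> y)"
  unfolding crossed_mult_def by simp

lemma snd_crossed_mult: "snd (Sm s t) = snd s \<otimes>\<^bsub>G\<^esub> snd t"
  unfolding crossed_mult_def by simp

lemma snd_crossed_mem: "s \<in> S \<Longrightarrow> snd s \<in> carrier G"
  unfolding crossed_carrier_def by auto

lemma crossed_mult_one:
  "e \<in> A \<Longrightarrow> x \<in> carrier G \<Longrightarrow> f \<in> D x \<Longrightarrow> Sm (e, \<one>\<^bsub>G\<^esub>) (f, x) = (m e f, x)"
  using crossed_mult_simp theta_inv_one theta_one mult_closed D_elem by simp

lemma mult_sinv_crossed_mem: "x \<in> carrier G \<Longrightarrow> a \<in> D x \<Longrightarrow> (m a (sinv A m a), x) \<in> S"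
  using crossed_mem D_mult_right D_elem sinv_closed mult_sinv_idem by simp

lemma crossed_mult_closed:
  assumes "(e, x) \<in> S" "(f, y) \<in> S"
  shows "Sm (e, x) (f, y) \<in> S"
proof -
  have x: "x \<in> carrier G" and e: "e \<in> D x" "m e e = e" and y: "y \<in> carrier G"
    and f: "f \<in> D y" "m f f = f" using assms crossed_mem by auto
  let ?u = "ti x e"
  have u: "?u \<in> D (inv\<^bsub>G\<^esub> x)" "m ?u ?u = ?u"
    using theta_inv_in theta_inv_idem_idem x e by auto
  have uf: "m ?u f \<in> D (inv\<^bsub>G\<^esub> x)" using D_mult_right u(1) D_elem y f(1) x by simp
  have "\<theta> x (m ?u f) \<in> setmul m (D x) (D (x \<otimes>\<^bsub>G\<^esub> y))"
    using theta_image_setmul[OF x y] setmulI[OF u(1) f(1)] by blast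
  then have "\<theta> x (m ?u f) \<in> D (x \<otimes>\<^bsub>G\<^esub> y)"
    unfolding setmul_def using D_mult_left x y D_elem by auto
  moreover have "m (m ?u f) (m ?u f) = m ?u f"
    using idem_mult_idem[OF D_elem[OF _ u(1)] u(2) D_elem[OF y f(1)] f(2)] x by simp
  then have "m (\<theta> x (m ?u f)) (\<theta> x (m ?u f)) = \<theta> x (m ?u f)"
    using theta_hom[OF x uf uf] by simp
  ultimately show ?thesis using x y crossed_mem crossed_mult_simp by auto
qed

lemma crossed_mult_inverse_eq:
  assumes s: "(e, x) \<in> S" and t: "(g, y) \<in> S" and xy: "x \<otimes>\<^bsub>G\<^esub> y = \<one>\<^bsub>G\<^esub>"
    and eq: "Sm (Sm (e, x) (g, y)) (e, x) = (e, x)"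
  shows "m e (\<theta> x g) = e"
proof -
  have x: "x \<in> carrier G" and e: "e \<in> D x" "m e e = e" and y: "y \<in> carrier G"
    and g: "g \<in> D y" using s t crossed_mem by auto
  have yx: "y = inv\<^bsub>G\<^esub> x" using xy x y by (metis G.inv_comm G.inv_equality)
  have eA: "e \<in> A" using D_elem x e by blast
  have tgA: "\<theta> x g \<in> A" using D_elem x theta_in yx g by blast
  have "Sm (e, x) (g, y) = (m e (\<theta> x g), \<one>\<^bsub>G\<^esub>)"
    using crossed_mult_simp theta_hom[OF x theta_inv_in[OF x e(1)]] g yx xy
      theta_theta_inv[OF x e(1)] by simp
  then have "m (m e (\<theta> x g)) e = e"
    using eq crossed_mult_one[OF mult_closed[OF eA tgA] x e(1)] by simp
  then show ?thesis
    using idem_commute[OF eA e(2)] mult_assoc eA tgA e(2) by metis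
qed

lemma crossed_sinv:
  assumes s: "(e, x) \<in> S"
  shows "sinv S Sm (e, x) = (ti x e, inv\<^bsub>G\<^esub> x)"
  unfolding sinv_def
proof (rule the_equality)
  have x: "x \<in> carrier G" and e: "e \<in> D x" "m e e = e" using s crossed_mem by auto
  let ?u = "ti x e"
  have ix: "inv\<^bsub>G\<^esub> x \<in> carrier G" using x by simp
  have u: "?u \<in> D (inv\<^bsub>G\<^esub> x)" "m ?u ?u = ?u" "\<theta> x ?u = e"
    using theta_inv_in theta_inv_idem_idem theta_theta_inv x e by auto
  have eA: "e \<in> A" and uA: "?u \<in> A" using D_elem x ix e u by auto
  have "Sm (e, x) (?u, inv\<^bsub>G\<^esub> x) = (e, \<one>\<^bsub>G\<^esub>)"
    using crossed_mult_simp u x by simp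
  moreover have "Sm (?u, inv\<^bsub>G\<^esub> x) (e, x) = (?u, \<one>\<^bsub>G\<^esub>)"
    using crossed_mult_simp x theta_inv_inv_theta_inv_idem[OF x e] e theta_inv_idem[OF x e] by simp
  moreover have "(?u, inv\<^bsub>G\<^esub> x) \<in> S" using crossed_mem ix u by simp
  ultimately show "(?u, inv\<^bsub>G\<^esub> x) \<in> S \<and> Sm (Sm (e, x) (?u, inv\<^bsub>G\<^esub> x)) (e, x) = (e, x) \<and>
      Sm (Sm (?u, inv\<^bsub>G\<^esub> x) (e, x)) (?u, inv\<^bsub>G\<^esub> x) = (?u, inv\<^bsub>G\<^esub> x)"
    using crossed_mult_one[OF eA x e(1)] crossed_mult_one[OF uA ix u(1)] e u by simp
next
  fix b assume b: "b \<in> S \<and> Sm (Sm (e, x) b) (e, x) = (e, x) \<and> Sm (Sm b (e, x)) b = b"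
  have x: "x \<in> carrier G" and e: "e \<in> D x" "m e e = e" using s crossed_mem by auto
  have ix: "inv\<^bsub>G\<^esub> x \<in> carrier G" using x by simp
  obtain g y where b_def: "b = (g, y)" by (cases b)
  have y: "y \<in> carrier G" and g: "g \<in> D y" "m g g = g" using b b_def crossed_mem by auto
  have "x \<otimes>\<^bsub>G\<^esub> y \<otimes>\<^bsub>G\<^esub> x = x" using b b_def crossed_mult_simp by simp
  then have yx: "y = inv\<^bsub>G\<^esub> x" using x y
    by (metis G.inv_equality G.l_cancel_one' G.m_assoc G.m_closed)
  have gD: "g \<in> D (inv\<^bsub>G\<^esub> x)" using g yx by simp
  have uD: "ti x e \<in> D (inv\<^bsub>G\<^esub> x)" using theta_inv_in[OF x e(1)] .
  have gA: "g \<in> A" and uA: "ti x e \<in> A" using D_elem ix gD uD by auto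
  have bS: "(g, inv\<^bsub>G\<^esub> x) \<in> S" using b b_def yx by simp
  have "m e (\<theta> x g) = e"
    using crossed_mult_inverse_eq[OF s bS G.r_inv[OF x]] b b_def yx by simp
  then have "\<theta> x (m (ti x e) g) = \<theta> x (ti x e)"
    using theta_hom[OF x uD gD] theta_theta_inv[OF x e(1)] by simp
  then have "m (ti x e) g = ti x e"
    using theta_inj[OF x] D_mult_right[OF ix gA uD] uD by (meson inj_onD)
  moreover have "m g (\<theta> (inv\<^bsub>G\<^esub> x) e) = g"
    using crossed_mult_inverse_eq[OF bS s G.l_inv[OF x]] b b_def yx by simp
  then have "m g (ti x e) = g" using theta_inv_idem[OF x e] by simp
  ultimately show "b = (ti x e, inv\<^bsub>G\<^esub> x)"
    using b_def yx idem_commute[OF gA g(2) uA] by simp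
qed

lemma crossed_mult_sinv: "(e, x) \<in> S \<Longrightarrow> Sm (e, x) (sinv S Sm (e, x)) = (e, \<one>\<^bsub>G\<^esub>)"
  using crossed_sinv crossed_mult_simp crossed_mem theta_theta_inv theta_inv_idem_idem by simp

lemma crossed_sinv_mult: "(e, x) \<in> S \<Longrightarrow> Sm (sinv S Sm (e, x)) (e, x) = (ti x e, \<one>\<^bsub>G\<^esub>)"
  using crossed_sinv crossed_mult_simp crossed_mem theta_inv_inv_theta_inv_idem theta_inv_idem
  by simp

subsection \<open>The maximum group image\<close>

definition fibre :: "'g \<Rightarrow> ('a \<times> 'g) set" where
  "fibre x = {s \<in> S. snd s = x}"

definition same_degree :: "(('a \<times> 'g) \<times> ('a \<times> 'g)) set" where
  "same_degree = {(s, t). s \<in> S \<and> t \<in> S \<and> snd s = snd t}"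

abbreviation "Q \<equiv> quot_monoid S Sm same_degree"

lemma same_degree_class: "s \<in> S \<Longrightarrow> same_degree `` {s} = fibre (snd s)"
  unfolding same_degree_def fibre_def by auto

lemma fibre_eq_class: "x \<in> carrier G \<Longrightarrow> \<exists>s\<in>S. snd s = x \<and> fibre x = same_degree `` {s}"
  using D_nonempty mult_sinv_crossed_mem same_degree_class by fastforce

lemma same_degree_congruence: "sg_congruence S Sm same_degree"
  unfolding sg_congruence_def equiv_def refl_on_def sym_def trans_def same_degree_def
  by (auto simp: snd_crossed_mult intro!: crossed_mult_closed)

lemma Q_carrier: "carrier Q = fibre ` carrier G"
proof -
  have "S // same_degree = fibre ` carrier G"
    unfolding quotient_def using same_degree_class snd_crossed_mem fibre_eq_class by fastforce
  then show ?thesis unfolding quot_monoid_def by simp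
qed

lemma Q_mult: "x \<in> carrier G \<Longrightarrow> y \<in> carrier G \<Longrightarrow> fibre x \<otimes>\<^bsub>Q\<^esub> fibre y = fibre (x \<otimes>\<^bsub>G\<^esub> y)"
  using fibre_eq_class quot_monoid_mult_class[OF same_degree_congruence]
    same_degree_class crossed_mult_closed snd_crossed_mult
  by (metis prod.collapse)

lemma snd_crossed_idem: "s \<in> S \<Longrightarrow> Sm s s = s \<Longrightarrow> snd s = \<one>\<^bsub>G\<^esub>"
  using snd_crossed_mult snd_crossed_mem by (metis G.l_cancel_one' G.m_closed)

lemma Q_one: "\<one>\<^bsub>Q\<^esub> = fibre \<one>\<^bsub>G\<^esub>"
proof -
  obtain a where a: "a \<in> A" using D_nonempty[of "\<one>\<^bsub>G\<^esub>"] D_one by auto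
  let ?e = "m a (sinv A m a)"
  have eS: "(?e, \<one>\<^bsub>G\<^esub>) \<in> S" using mult_sinv_crossed_mem[of "\<one>\<^bsub>G\<^esub>" a] a D_one by simp
  then have "Sm (?e, \<one>\<^bsub>G\<^esub>) (?e, \<one>\<^bsub>G\<^esub>) = (?e, \<one>\<^bsub>G\<^esub>)"
    using crossed_mult_one crossed_mem D_one by simp
  then have "(?e, \<one>\<^bsub>G\<^esub>) \<in> idems S Sm" using eS unfolding idems_def by simp
  then have "(SOME e. e \<in> idems S Sm) \<in> idems S Sm" by (rule someI)
  then show ?thesis
    unfolding quot_monoid_def idems_def using same_degree_class snd_crossed_idem by simp
qed

lemma fibre_inj: "inj_on fibre (carrier G)"
proof (rule inj_onI)
  fix x y assume x: "x \<in> carrier G" and "fibre x = fibre y"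
  obtain s where "s \<in> fibre x" using fibre_eq_class[OF x] unfolding fibre_def by blast
  then show "x = y" using \<open>fibre x = fibre y\<close> unfolding fibre_def by auto
qed

lemma Q_group: "group Q"
proof (rule groupI)
  show "\<one>\<^bsub>Q\<^esub> \<in> carrier Q" using Q_one Q_carrier by simp
next
  fix X Y assume "X \<in> carrier Q" "Y \<in> carrier Q"
  then show "X \<otimes>\<^bsub>Q\<^esub> Y \<in> carrier Q" using Q_carrier Q_mult by auto
next
  fix X Y Z assume "X \<in> carrier Q" "Y \<in> carrier Q" "Z \<in> carrier Q"
  then show "X \<otimes>\<^bsub>Q\<^esub> Y \<otimes>\<^bsub>Q\<^esub> Z = X \<otimes>\<^bsub>Q\<^esub> (Y \<otimes>\<^bsub>Q\<^esub> Z)"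
    using Q_carrier Q_mult G.m_assoc by auto
next
  fix X assume "X \<in> carrier Q"
  then show "\<one>\<^bsub>Q\<^esub> \<otimes>\<^bsub>Q\<^esub> X = X" using Q_carrier Q_mult Q_one by auto
next
  fix X assume "X \<in> carrier Q"
  then obtain x where x: "x \<in> carrier G" "X = fibre x" using Q_carrier by auto
  then have "fibre (inv\<^bsub>G\<^esub> x) \<in> carrier Q \<and> fibre (inv\<^bsub>G\<^esub> x) \<otimes>\<^bsub>Q\<^esub> X = \<one>\<^bsub>Q\<^esub>"
    using Q_mult Q_one Q_carrier by simp
  then show "\<exists>Y\<in>carrier Q. Y \<otimes>\<^bsub>Q\<^esub> X = \<one>\<^bsub>Q\<^esub>" by blast
qed

lemma group_congruence_relates_idems:
  assumes gc: "group_congruence S Sm r"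
    and i: "i \<in> A" "m i i = i" and j: "j \<in> A" "m j j = j"
  shows "((i, \<one>\<^bsub>G\<^esub>), (j, \<one>\<^bsub>G\<^esub>)) \<in> r"
proof -
  have eq: "equiv S r" using gc unfolding group_congruence_def sg_congruence_def by simp
  have S1: "(i, \<one>\<^bsub>G\<^esub>) \<in> S" "(j, \<one>\<^bsub>G\<^esub>) \<in> S" using crossed_mem D_one i j by auto
  moreover have "Sm (i, \<one>\<^bsub>G\<^esub>) (i, \<one>\<^bsub>G\<^esub>) = (i, \<one>\<^bsub>G\<^esub>)" "Sm (j, \<one>\<^bsub>G\<^esub>) (j, \<one>\<^bsub>G\<^esub>) = (j, \<one>\<^bsub>G\<^esub>)"
    using crossed_mult_one D_one i j by auto
  ultimately have "r `` {(i, \<one>\<^bsub>G\<^esub>)} = r `` {(j, \<one>\<^bsub>G\<^esub>)}"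
    using group_congruence_idem_class[OF gc] by simp
  then show ?thesis using eq_equiv_class_iff[OF eq S1] by simp
qed

lemma same_degree_subset_group_congruence:
  assumes gc: "group_congruence S Sm r"
  shows "same_degree \<subseteq> r"
proof
  fix p assume "p \<in> same_degree"
  then obtain e f x where p: "p = ((e, x), (f, x))" and s: "(e, x) \<in> S" "(f, x) \<in> S"
    unfolding same_degree_def by auto
  have x: "x \<in> carrier G" and e: "e \<in> D x" "m e e = e" and f: "f \<in> D x" "m f f = f"
    using s crossed_mem by auto
  have eA: "e \<in> A" and fA: "f \<in> A" using e f D_elem x by auto
  have eq: "equiv S r"
    and compat: "\<And>s t u. (s, t) \<in> r \<Longrightarrow> u \<in> S \<Longrightarrow> (Sm s u, Sm t u) \<in> r"
    using gc unfolding group_congruence_def sg_congruence_def by auto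
  let ?g = "m e f"
  have gA: "?g \<in> A" using mult_closed eA fA by simp
  have g_idem: "m ?g ?g = ?g" using idem_mult_idem eA fA e f by simp
  have "(Sm (e, \<one>\<^bsub>G\<^esub>) (e, x), Sm (?g, \<one>\<^bsub>G\<^esub>) (e, x)) \<in> r"
    using compat[OF group_congruence_relates_idems[OF gc eA e(2) gA g_idem] s(1)] .
  moreover have "Sm (e, \<one>\<^bsub>G\<^esub>) (e, x) = (e, x)" "Sm (?g, \<one>\<^bsub>G\<^esub>) (e, x) = (?g, x)"
    using crossed_mult_one[OF eA x e(1)] crossed_mult_one[OF gA x e(1)] e(2)
      idem_mult_absorb[OF eA e(2) fA] by simp_all
  ultimately have "((e, x), (?g, x)) \<in> r" by simp
  have "(Sm (f, \<one>\<^bsub>G\<^esub>) (f, x), Sm (?g, \<one>\<^bsub>G\<^esub>) (f, x)) \<in> r"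
    using compat[OF group_congruence_relates_idems[OF gc fA f(2) gA g_idem] s(2)] .
  moreover have "Sm (f, \<one>\<^bsub>G\<^esub>) (f, x) = (f, x)" "Sm (?g, \<one>\<^bsub>G\<^esub>) (f, x) = (?g, x)"
    using crossed_mult_one[OF fA x f(1)] crossed_mult_one[OF gA x f(1)] f(2)
      mult_assoc[OF eA fA fA] by simp_all
  ultimately have "((f, x), (?g, x)) \<in> r" by simp
  with \<open>((e, x), (?g, x)) \<in> r\<close> show "p \<in> r"
    using p eq unfolding equiv_def sym_def trans_def by blast
qed

lemma max_group_image_eq: "max_group_image S Sm = Q"
proof -
  have "group_congruence S Sm same_degree"
    unfolding group_congruence_def using same_degree_congruence Q_group by simp
  then have "min_group_congruence S Sm = same_degree"
    unfolding min_group_congruence_def using same_degree_subset_group_congruence by blast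
  then show ?thesis unfolding max_group_image_def by simp
qed

lemma fibre_iso: "fibre \<in> iso G (max_group_image S Sm)"
  unfolding max_group_image_eq iso_def hom_def bij_betw_def
  using Q_carrier Q_mult fibre_inj by auto

subsection \<open>Recovering \<open>\<Theta>\<close> from \<open>\<Theta>\<^sup>\<Lambda>\<close>\<close>

lemma LT_alpha_mult_sinv: "s \<in> S \<Longrightarrow> LT_alpha (Sm s (sinv S Sm s)) = fst s"
  using crossed_mult_sinv unfolding LT_alpha_def by (metis fst_conv prod.collapse)

lemma TL_dom_fibre:
  assumes x: "x \<in> carrier G"
  shows "TL_dom S Sm A m LT_alpha (fibre x) = D x"
proof -
  have "TL_dom S Sm A m LT_alpha (fibre x) = (\<Union>s\<in>fibre x. comp_grp A m (fst s))"
    unfolding TL_dom_def fibre_def using LT_alpha_mult_sinv by auto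
  also have "\<dots> = D x"
  proof (intro equalityI subsetI)
    fix a assume "a \<in> (\<Union>s\<in>fibre x. comp_grp A m (fst s))"
    then obtain e where e: "(e, x) \<in> S" and a: "a \<in> comp_grp A m e" unfolding fibre_def by auto
    have aA: "a \<in> A" and ae: "m a (sinv A m a) = e" using a unfolding comp_grp_def by auto
    have "a = m e a" using mult_sinv_mult[OF aA] unfolding ae by simp
    then show "a \<in> D x" using D_mult_right[OF x aA] e crossed_mem idem_commute D_elem x aA
      by metis
  next
    fix a assume a: "a \<in> D x"
    have aA: "a \<in> A" using D_elem x a by blast
    have "(m a (sinv A m a), x) \<in> fibre x" using mult_sinv_crossed_mem[OF x a] unfolding fibre_def by simp
    moreover have "a \<in> comp_grp A m (m a (sinv A m a))"
      unfolding comp_grp_def using aA sinv_mult_eq_mult_sinv by simp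
    ultimately show "a \<in> (\<Union>s\<in>fibre x. comp_grp A m (fst s))" by force
  qed
  finally show ?thesis .
qed

text \<open>The element of \<open>\<nu> x\<close> selected by \<open>a \<in> D\<^sub>x\<^sub>\<^sup>-\<^sup>1\<close> in \<open>\<theta>'\<close> is \<open>\<theta>\<^sub>x(aa\<^sup>-\<^sup>1)\<delta>\<^sub>x\<close>.\<close>

lemma TL_theta_fibre:
  assumes x: "x \<in> carrier G" and a: "a \<in> D (inv\<^bsub>G\<^esub> x)"
  shows "TL_theta S Sm A m LT_alpha (LT_lambda G m D \<theta>) (fibre x) a = \<theta> x a"
proof -
  have ix: "inv\<^bsub>G\<^esub> x \<in> carrier G" using x by simp
  have aA: "a \<in> A" using D_elem ix a by blast
  let ?f = "m a (sinv A m a)"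
  let ?e = "\<theta> x ?f"
  have fD: "?f \<in> D (inv\<^bsub>G\<^esub> x)" using D_mult_right[OF ix] a aA sinv_closed by simp
  have "m ?e ?e = ?e" using theta_hom[OF x fD fD] mult_sinv_idem aA by simp
  then have eS: "(?e, x) \<in> S" using crossed_mem x theta_in[OF x fD] by simp
  have ti_e: "ti x ?e = ?f" using theta_inv_theta[OF x fD] .
  have "(THE s. s \<in> fibre x \<and> LT_alpha (Sm (sinv S Sm s) s) = ?f) = (?e, x)"
  proof (rule the_equality)
    show "(?e, x) \<in> fibre x \<and> LT_alpha (Sm (sinv S Sm (?e, x)) (?e, x)) = ?f"
      using eS crossed_sinv_mult[OF eS] ti_e unfolding fibre_def LT_alpha_def by simp
  next
    fix s assume s: "s \<in> fibre x \<and> LT_alpha (Sm (sinv S Sm s) s) = ?f"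
    then obtain e where s_def: "s = (e, x)" and eS': "(e, x) \<in> S" unfolding fibre_def by (cases s) auto
    then have "ti x e = ?f" using s crossed_sinv_mult unfolding LT_alpha_def by simp
    moreover have "\<theta> x (ti x e) = e" using theta_theta_inv x eS' crossed_mem by simp
    ultimately show "s = (?e, x)" using s_def by simp
  qed
  then have "TL_theta S Sm A m LT_alpha (LT_lambda G m D \<theta>) (fibre x) a = LT_lambda G m D \<theta> (?e, x) a"
    unfolding TL_theta_def by simp
  also have "\<dots> = \<theta> x a" unfolding LT_lambda_def using ti_e mult_sinv_mult[OF aA] by simp
  finally show ?thesis .
qed

lemma fibre_select:
  assumes z: "z \<in> carrier G" and a: "a \<in> D z"
  shows "(THE s. s \<in> fibre z \<and> LT_alpha (Sm s (sinv S Sm s)) = m a (sinv A m a))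
    = (m a (sinv A m a), z)"
  using mult_sinv_crossed_mem[OF z a] LT_alpha_mult_sinv unfolding fibre_def
  by (intro the_equality) fastforce+

text \<open>
  The coefficient \<open>f(s, s\<^sup>-\<^sup>1t)\<close> of \<open>w'\<close> at \<open>a\<close> is \<open>ew\<^sub>x\<^sub>,\<^sub>y\<close> for \<open>e = aa\<^sup>-\<^sup>1\<close>, since
  \<open>s = e\<delta>\<^sub>x\<close>, \<open>t = e\<delta>\<^sub>x\<^sub>y\<close> and \<open>s\<^sup>-\<^sup>1t = \<theta>\<^sub>x\<^sup>-\<^sup>1(e)\<delta>\<^sub>y\<close>.
\<close>

lemma TL_w_fibre_apply:
  assumes x: "x \<in> carrier G" and y: "y \<in> carrier G"
    and ax: "a \<in> D x" and axy: "a \<in> D (x \<otimes>\<^bsub>G\<^esub> y)"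
  defines "e \<equiv> m a (sinv A m a)"
  shows "fst (TL_w S Sm A m LT_alpha (LT_f G m D \<theta> w) (fibre x) (fibre y)) a = m (snd (w x y) e) a"
    and "snd (TL_w S Sm A m LT_alpha (LT_f G m D \<theta> w) (fibre x) (fibre y)) a = m a (snd (w x y) e)"
proof -
  have xy: "x \<otimes>\<^bsub>G\<^esub> y \<in> carrier G" using x y by simp
  have eS: "(e, x) \<in> S" using mult_sinv_crossed_mem[OF x ax] unfolding e_def .
  then have e: "e \<in> D x" "m e e = e" using crossed_mem by auto
  have "inv\<^bsub>G\<^esub> x \<otimes>\<^bsub>G\<^esub> (x \<otimes>\<^bsub>G\<^esub> y) = y" using x y by (simp add: G.m_assoc[symmetric])
  then have "Sm (sinv S Sm (e, x)) (e, x \<otimes>\<^bsub>G\<^esub> y) = (ti x e, y)"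
    using crossed_sinv[OF eS] crossed_mult_simp theta_inv_inv_theta_inv_idem[OF x e]
      theta_inv_idem[OF x e] e(2) by simp
  moreover have "LT_f G m D \<theta> w (e, x) (ti x e, y) = snd (w x y) e"
    unfolding LT_f_def using theta_inv_idem_idem[OF x e] theta_theta_inv[OF x e(1)] by simp
  moreover have "fibre x \<otimes>\<^bsub>max_group_image S Sm\<^esub> fibre y = fibre (x \<otimes>\<^bsub>G\<^esub> y)"
    using max_group_image_eq Q_mult x y by simp
  ultimately show "fst (TL_w S Sm A m LT_alpha (LT_f G m D \<theta> w) (fibre x) (fibre y)) a = m (snd (w x y) e) a"
    and "snd (TL_w S Sm A m LT_alpha (LT_f G m D \<theta> w) (fibre x) (fibre y)) a = m a (snd (w x y) e)"
    by (simp_all add: TL_w_def Let_def fibre_select[OF x ax] fibre_select[OF xy axy] e_def)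
qed

lemma TL_w_fibre:
  assumes x: "x \<in> carrier G" and y: "y \<in> carrier G"
  shows "mult_eq_on (setmul m (D x) (D (x \<otimes>\<^bsub>G\<^esub> y))) (w x y)
           (TL_w S Sm A m LT_alpha (LT_f G m D \<theta> w) (fibre x) (fibre y))"
  unfolding mult_eq_on_def
proof
  let ?T = "setmul m (D x) (D (x \<otimes>\<^bsub>G\<^esub> y))"
  fix a assume aT: "a \<in> ?T"
  let ?e = "m a (sinv A m a)"
  have xy: "x \<otimes>\<^bsub>G\<^esub> y \<in> carrier G" using x y by simp
  have TA: "?T \<subseteq> A" using setmul_subset D_subset x xy by simp
  have aA: "a \<in> A" using aT TA by auto
  have ax: "a \<in> D x" and axy: "a \<in> D (x \<otimes>\<^bsub>G\<^esub> y)"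
    using aT D_mult_left D_mult_right D_elem x xy unfolding setmul_def by auto
  have ex: "?e \<in> D x" and e_idem: "m ?e ?e = ?e"
    using mult_sinv_crossed_mem[OF x ax] crossed_mem by auto
  have "?e \<in> D (x \<otimes>\<^bsub>G\<^esub> y)" using mult_sinv_crossed_mem[OF xy axy] crossed_mem by simp
  then have eT: "?e \<in> ?T" using setmulI[OF ex] e_idem by metis
  have wm: "is_multiplier ?T m (w x y)" using w_unit[OF x y] unfolding is_unit_multiplier_def by blast
  show "fst (w x y) a = fst (TL_w S Sm A m LT_alpha (LT_f G m D \<theta> w) (fibre x) (fibre y)) a \<and>
        snd (w x y) a = snd (TL_w S Sm A m LT_alpha (LT_f G m D \<theta> w) (fibre x) (fibre y)) a"
    using multiplier_apply_mult_sinv[OF wm aT aA eT] TL_w_fibre_apply[OF x y ax axy]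
      multiplier_fst_eq_snd_idem[OF wm TA eT e_idem] by simp
qed

end

theorem proposition9p2:
  fixes G :: "('g, 'b) monoid_scheme"
    and A :: "'a set" and m :: "'a \<Rightarrow> 'a \<Rightarrow> 'a"
    and D :: "'g \<Rightarrow> 'a set" and \<theta> :: "'g \<Rightarrow> 'a \<Rightarrow> 'a"
    and w :: "'g \<Rightarrow> 'g \<Rightarrow> 'a multiplier"
  assumes "group G"
    and "semilattice_of_groups A m"
    and "twisted_partial_action G A m D \<theta> w"
  shows "\<exists>\<nu>. \<nu> \<in> iso G (max_group_image (crossed_carrier G A m D) (crossed_mult G m D \<theta>)) \<and>
           (\<forall>x\<in>carrier G.
              D x = TL_dom (crossed_carrier G A m D) (crossed_mult G m D \<theta>) A m LT_alpha (\<nu> x) \<and>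
              (\<forall>a\<in>D (inv\<^bsub>G\<^esub> x).
                 \<theta> x a = TL_theta (crossed_carrier G A m D) (crossed_mult G m D \<theta>) A m LT_alpha
                             (LT_lambda G m D \<theta>) (\<nu> x) a)) \<and>
           (\<forall>x\<in>carrier G. \<forall>y\<in>carrier G.
              mult_eq_on (setmul m (D x) (D (x \<otimes>\<^bsub>G\<^esub> y))) (w x y)
                (TL_w (crossed_carrier G A m D) (crossed_mult G m D \<theta>) A m LT_alpha
                   (LT_f G m D \<theta> w) (\<nu> x) (\<nu> y)))"
proof -
  interpret twisted_pa G A m D \<theta> w
    using assms by (simp add: twisted_pa_def twisted_pa_axioms_def semilattice_grp_def)
  show ?thesis
    using fibre_iso TL_dom_fibre TL_theta_fibre TL_w_fibre by metis
qed

end
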